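(* From any (code for a) computable tree $T\subseteq 2^{<\omega}$ one may uniformly compute a (code for a) computable function $f_T:[0,1]\to[0,1]$ such that: (1) $f_T$ is continuous and increasing with $f_T(x)\ge x$ for all $x$; (2) $f_T(x)=x$ if and only if $x\in\{0,1\}$, or $x\in\mathcal{C}$ and $c^{-1}(x)\in[T]$.
   Context: $2^{<\omega}$ is the set of finite binary strings; a tree is a subset of $2^{<\omega}$ closed under initial segments, and it is computable if it is a computable set under a standard computable coding of strings by natural numbers. $[T]$ is the set of $X\in 2^\omega$ all of whose finite initial segments lie in $T$. $\mathcal{C}\subseteq[0,1]$ is the set of $x$ whose ternary expansion begins with digit $1$ and continues using only digits $0$ and $2$; for $X\in 2^\omega$, $c(X)$ is the unique $x\in\mathcal{C}$ whose first ternary digit is $1$ and whose $(n+1)$st ternary digit (after the point, counting the first as digit $0$... i.e. the digit following the $n$ digits after the leading $1$) is $2X(n)$. A code for a continuous $f:[0,1]\to[0,1]$ consists of Cauchy names (rational approximations within $2^{-n}$ for every $n$) of $f(q)$ for each rational $q\in[0,1]$ together with a modulus of uniform continuity $d:\mathbb{N}\to\mathbb{N}$ ($|x-y|<2^{-d(m)}\Rightarrow |f(x)-f(y)|<2^{-m}$); $f$ is computable if it has a computable code. "Uniformly compute" means there is a single algorithm which, given a code for $T$, produces a code for $f_T$. *)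

theory Defs
  imports "HOL-Analysis.Analysis" "HOL-Library.Nat_Bijection"
begin

datatype prog =
    Zero
  | Succ
  | Proj nat
  | Oracle
  | Comp prog "prog list"
  | Prim prog prog
  | Mn prog

inductive ev :: "(nat \<Rightarrow> nat) \<Rightarrow> prog \<Rightarrow> nat list \<Rightarrow> nat \<Rightarrow> bool" for g where
  ev_zero: "ev g Zero xs 0"
| ev_succ: "ev g Succ (x # xs) (Suc x)"
| ev_proj: "i < length xs \<Longrightarrow> ev g (Proj i) xs (xs ! i)"
| ev_oracle: "ev g Oracle (x # xs) (g x)"
| ev_comp: "list_all2 (\<lambda>q y. ev g q xs y) qs ys \<Longrightarrow> ev g f ys z \<Longrightarrow> ev g (Comp f qs) xs z"
| ev_prim0: "ev g f xs y \<Longrightarrow> ev g (Prim f h) (0 # xs) y"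
| ev_primS: "ev g (Prim f h) (n # xs) r \<Longrightarrow> ev g h (n # r # xs) y \<Longrightarrow> ev g (Prim f h) (Suc n # xs) y"
| ev_mn: "ev g f (n # xs) 0 \<Longrightarrow> (\<forall>m<n. \<exists>y. y > 0 \<and> ev g f (m # xs) y) \<Longrightarrow> ev g (Mn f) xs n"

text \<open>A total function nat => nat is computable if some program (without using the oracle,
  here fixed to the constant-0 oracle) computes it.\<close>
definition computable_fun :: "(nat \<Rightarrow> nat) \<Rightarrow> bool" where
  "computable_fun h \<longleftrightarrow> (\<exists>p. \<forall>x. ev (\<lambda>_. 0) p [x] (h x))"

fun str_code :: "bool list \<Rightarrow> nat" where
  "str_code [] = 0"
| "str_code (b # bs) = 2 * str_code bs + (if b then 2 else 1)"

definition is_tree :: "bool list set \<Rightarrow> bool" where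
  "is_tree T \<longleftrightarrow> (\<forall>s\<in>T. \<forall>n. take n s \<in> T)"

definition chi :: "bool list set \<Rightarrow> nat \<Rightarrow> nat" where
  "chi T n = (if \<exists>s\<in>T. str_code s = n then 1 else 0)"

definition computable_tree :: "bool list set \<Rightarrow> bool" where
  "computable_tree T \<longleftrightarrow> is_tree T \<and> computable_fun (chi T)"

definition paths :: "bool list set \<Rightarrow> (nat \<Rightarrow> bool) set" where
  "paths T = {X. \<forall>n. map X [0..<n] \<in> T}"

definition cantor :: "(nat \<Rightarrow> bool) \<Rightarrow> real" where
  "cantor X = 1/3 + (\<Sum>n. (if X n then 2 else 0) / 3 ^ (n + 2))"

definition cantor_set :: "real set" where
  "cantor_set = range cantor"

definition rat_of_code :: "nat \<Rightarrow> real" where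
  "rat_of_code n = (case prod_decode n of (a, b) \<Rightarrow> real_of_int (int_decode a) / real (b + 1))"

definition is_code :: "(real \<Rightarrow> real) \<Rightarrow> (nat \<Rightarrow> nat \<Rightarrow> nat) \<Rightarrow> (nat \<Rightarrow> nat) \<Rightarrow> bool" where
  "is_code f A D \<longleftrightarrow>
     (\<forall>i n. rat_of_code i \<in> {0..1} \<longrightarrow> \<bar>rat_of_code (A i n) - f (rat_of_code i)\<bar> \<le> 1 / 2 ^ n) \<and>
     (\<forall>m x y. x \<in> {0..1} \<longrightarrow> y \<in> {0..1} \<longrightarrow> \<bar>x - y\<bar> < 1 / 2 ^ D m \<longrightarrow> \<bar>f x - f y\<bar> < 1 / 2 ^ m)"

end

theory Submission
  imports Defs
begin

text \<open>
  Put f_T x = x + E x, where E is a sum of nonnegative tent functions. Two tents are supported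
  on (0, 1/3) and (2/3, 1). Every string s carries a tent of weight 2^-(code s + 2): if s \<in> T it
  is supported on the middle third removed from the Cantor interval of s, otherwise on an open
  neighbourhood of that whole interval. Hence E x = 0 exactly when x is 0, 1, or the image of a
  Cantor sequence none of whose prefixes leaves T, i.e. of a path through T.
  Both groups of tents have total weight 1/2, so E is 1-Lipschitz: f_T is increasing and
  2-Lipschitz, which gives the modulus m + 1. At a rational p/r the first n tents add up to a
  rational computable from p, r, n and the oracle chi T by primitive recursion, and the remaining
  tail is at most 2^-n.
\<close>

section \<open>Primitive recursion relative to an oracle\<close>

text \<open>A single program computes F g for every oracle g; this is what makes the construction
  uniform in the tree.\<close>
definition oracle_pr :: "nat \<Rightarrow> ((nat \<Rightarrow> nat) \<Rightarrow> nat list \<Rightarrow> nat) \<Rightarrow> bool" where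
  "oracle_pr n F \<longleftrightarrow> (\<exists>p. \<forall>g xs. length xs = n \<longrightarrow> ev g p xs (F g xs))"

lemma oracle_pr_cong:
  assumes "oracle_pr n F" and "\<And>g xs. length xs = n \<Longrightarrow> F g xs = G g xs"
  shows "oracle_pr n G"
  using assms unfolding oracle_pr_def by metis

lemma oracle_pr_zero: "oracle_pr n (\<lambda>g xs. 0)"
  unfolding oracle_pr_def by (blast intro: ev_zero)

lemma oracle_pr_proj: "i < n \<Longrightarrow> oracle_pr n (\<lambda>g xs. xs ! i)"
  unfolding oracle_pr_def by (blast intro: ev_proj)

lemma oracle_pr_succ_proj: "oracle_pr 1 (\<lambda>g xs. Suc (xs ! 0))"
  unfolding oracle_pr_def by (metis One_nat_def ev_succ length_Suc_conv nth_Cons_0)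

lemma oracle_pr_oracle_proj: "oracle_pr 1 (\<lambda>g xs. g (xs ! 0))"
  unfolding oracle_pr_def by (metis One_nat_def ev_oracle length_Suc_conv nth_Cons_0)

lemma oracle_pr_programs:
  assumes "\<forall>F\<in>set Fs. oracle_pr n F"
  shows "\<exists>ps. \<forall>g xs. length xs = n \<longrightarrow> list_all2 (\<lambda>q y. ev g q xs y) ps (map (\<lambda>F. F g xs) Fs)"
  using assms
proof (induction Fs)
  case (Cons F Fs)
  then obtain ps where "\<forall>g xs. length xs = n \<longrightarrow> list_all2 (\<lambda>q y. ev g q xs y) ps (map (\<lambda>F. F g xs) Fs)"
    by auto
  moreover obtain p where "\<forall>g xs. length xs = n \<longrightarrow> ev g p xs (F g xs)"
    using Cons.prems unfolding oracle_pr_def by auto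
  ultimately show ?case by (intro exI[of _ "p # ps"]) auto
qed simp

lemma oracle_pr_comp:
  assumes "oracle_pr m H" "length Fs = m" "\<forall>F\<in>set Fs. oracle_pr n F"
  shows "oracle_pr n (\<lambda>g xs. H g (map (\<lambda>F. F g xs) Fs))"
proof -
  obtain ps where ps: "\<forall>g xs. length xs = n \<longrightarrow> list_all2 (\<lambda>q y. ev g q xs y) ps (map (\<lambda>F. F g xs) Fs)"
    using oracle_pr_programs[OF assms(3)] by auto
  obtain h where h: "\<forall>g xs. length xs = m \<longrightarrow> ev g h xs (H g xs)"
    using assms(1) unfolding oracle_pr_def by auto
  have "ev g (Comp h ps) xs (H g (map (\<lambda>F. F g xs) Fs))" if "length xs = n" for g xs
    using ps h assms(2) that by (intro ev_comp[where ys = "map (\<lambda>F. F g xs) Fs"]) auto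
  then show ?thesis unfolding oracle_pr_def by blast
qed

lemma oracle_pr_select:
  assumes "oracle_pr m H" "length idx = m" "\<forall>i\<in>set idx. i < n"
  shows "oracle_pr n (\<lambda>g xs. H g (map ((!) xs) idx))"
  using oracle_pr_comp[OF assms(1), of "map (\<lambda>i g xs. xs ! i) idx" n] assms
  by (simp add: comp_def oracle_pr_proj)

lemma oracle_pr_drop:
  assumes "oracle_pr n G"
  shows "oracle_pr (k + n) (\<lambda>g xs. G g (drop k xs))"
proof (rule oracle_pr_cong[OF oracle_pr_select[OF assms, of "[k..<k + n]"]])
  fix g and xs :: "nat list"
  assume "length xs = k + n"
  then have "map ((!) xs) [k..<k + n] = drop k xs" by (intro nth_equalityI) auto
  then show "G g (map ((!) xs) [k..<k + n]) = G g (drop k xs)" by simp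
qed auto

lemma oracle_pr_compose1:
  assumes "oracle_pr 1 H" "oracle_pr n F"
  shows "oracle_pr n (\<lambda>g xs. H g [F g xs])"
  using oracle_pr_comp[OF assms(1), of "[F]"] assms(2) by simp

lemma oracle_pr_push:
  assumes "oracle_pr (Suc n) F" "oracle_pr n E"
  shows "oracle_pr n (\<lambda>g xs. F g (E g xs # xs))"
proof (rule oracle_pr_cong)
  show "oracle_pr n (\<lambda>g xs. F g (map (\<lambda>F. F g xs) (E # map (\<lambda>i g xs. xs ! i) [0..<n])))"
    using assms by (intro oracle_pr_comp) (auto intro: oracle_pr_proj)
next
  fix g and xs :: "nat list"
  assume "length xs = n"
  then show "F g (map (\<lambda>F. F g xs) (E # map (\<lambda>i g xs. xs ! i) [0..<n])) = F g (E g xs # xs)"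
    using map_nth[of xs] by (simp add: comp_def)
qed

lemma oracle_pr_rec:
  assumes "oracle_pr n B" "oracle_pr (Suc (Suc n)) S" "oracle_pr n E"
  shows "oracle_pr n (\<lambda>g xs. rec_nat (B g xs) (\<lambda>m r. S g (m # r # xs)) (E g xs))"
proof -
  obtain pb where pb: "\<forall>g xs. length xs = n \<longrightarrow> ev g pb xs (B g xs)"
    using assms(1) unfolding oracle_pr_def by auto
  obtain ps where ps: "\<forall>g xs. length xs = Suc (Suc n) \<longrightarrow> ev g ps xs (S g xs)"
    using assms(2) unfolding oracle_pr_def by auto
  have "ev g (Prim pb ps) (m # xs) (rec_nat (B g xs) (\<lambda>m r. S g (m # r # xs)) m)"
    if "length xs = n" for g m xs
    by (induction m) (use pb ps that in \<open>auto intro: ev_prim0 ev_primS\<close>)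
  then have "oracle_pr (Suc n) (\<lambda>g ys. rec_nat (B g (tl ys)) (\<lambda>m r. S g (m # r # tl ys)) (hd ys))"
    unfolding oracle_pr_def by (intro exI[of _ "Prim pb ps"] allI impI) (auto simp: length_Suc_conv)
  from oracle_pr_push[OF this assms(3)] show ?thesis by simp
qed

lemma oracle_pr_succ: "oracle_pr n F \<Longrightarrow> oracle_pr n (\<lambda>g xs. Suc (F g xs))"
  using oracle_pr_compose1[OF oracle_pr_succ_proj] by simp

lemma oracle_pr_oracle: "oracle_pr n F \<Longrightarrow> oracle_pr n (\<lambda>g xs. g (F g xs))"
  using oracle_pr_compose1[OF oracle_pr_oracle_proj] by simp

lemma oracle_pr_const: "oracle_pr n (\<lambda>g xs. c)"
  by (induction c) (auto intro: oracle_pr_zero oracle_pr_succ)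

lemma oracle_pr_fst: "oracle_pr (Suc n) (\<lambda>g xs. xs ! 0)"
  by (rule oracle_pr_proj) simp

lemma oracle_pr_snd: "oracle_pr (Suc (Suc n)) (\<lambda>g xs. xs ! 1)"
  by (rule oracle_pr_proj) simp

lemma oracle_pr_drop1: "oracle_pr n G \<Longrightarrow> oracle_pr (Suc n) (\<lambda>g xs. G g (drop 1 xs))"
  using oracle_pr_drop[of n G 1] by simp

lemma oracle_pr_drop2: "oracle_pr n G \<Longrightarrow> oracle_pr (Suc (Suc n)) (\<lambda>g xs. G g (drop 2 xs))"
  using oracle_pr_drop[of n G 2] by simp

lemma oracle_pr_add:
  assumes "oracle_pr n F" "oracle_pr n G"
  shows "oracle_pr n (\<lambda>g xs. F g xs + G g xs)"
proof -
  have "rec_nat b (\<lambda>m. Suc) a = a + b" for a b :: nat by (induction a) simp_all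
  with oracle_pr_rec[OF assms(2) oracle_pr_succ[OF oracle_pr_snd] assms(1)] show ?thesis by simp
qed

lemma oracle_pr_mult:
  assumes "oracle_pr n F" "oracle_pr n G"
  shows "oracle_pr n (\<lambda>g xs. F g xs * G g xs)"
proof -
  have "rec_nat 0 (\<lambda>m r. r + b) a = a * b" for a b :: nat by (induction a) simp_all
  with oracle_pr_rec[OF oracle_pr_const[of n 0] oracle_pr_add[OF oracle_pr_snd oracle_pr_drop2[OF assms(2)]] assms(1)]
  show ?thesis by simp
qed

lemma oracle_pr_diff:
  assumes "oracle_pr n F" "oracle_pr n G"
  shows "oracle_pr n (\<lambda>g xs. F g xs - G g xs)"
proof -
  have "rec_nat 0 (\<lambda>m r. m) a = a - 1" for a :: nat by (cases a) simp_all
  with oracle_pr_rec[OF oracle_pr_const[of "Suc (Suc n)" 0] oracle_pr_fst oracle_pr_snd]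
  have pred: "oracle_pr (Suc (Suc n)) (\<lambda>g xs. xs ! 1 - 1)" by simp
  have "rec_nat a (\<lambda>m r. r - 1) b = a - b" for a b :: nat by (induction b) simp_all
  with oracle_pr_rec[OF assms(1) pred assms(2)] show ?thesis by simp
qed

lemma oracle_pr_power:
  assumes "oracle_pr n F" "oracle_pr n G"
  shows "oracle_pr n (\<lambda>g xs. F g xs ^ G g xs)"
proof -
  have "rec_nat 1 (\<lambda>m r. r * a) b = a ^ b" for a b :: nat by (induction b) simp_all
  with oracle_pr_rec[OF oracle_pr_const[of n 1] oracle_pr_mult[OF oracle_pr_snd oracle_pr_drop2[OF assms(1)]] assms(2)]
  show ?thesis by simp
qed

lemma oracle_pr_if_zero:
  assumes "oracle_pr n C" "oracle_pr n F" "oracle_pr n G"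
  shows "oracle_pr n (\<lambda>g xs. if C g xs = 0 then F g xs else G g xs)"
proof -
  have "rec_nat a (\<lambda>m r. b) c = (if c = 0 then a else b)" for a b c :: nat by (cases c) simp_all
  with oracle_pr_rec[OF assms(2) oracle_pr_drop2[OF assms(3)] assms(1)] show ?thesis by simp
qed

lemma oracle_pr_if_le:
  assumes "oracle_pr n A" "oracle_pr n B" "oracle_pr n F" "oracle_pr n G"
  shows "oracle_pr n (\<lambda>g xs. if A g xs \<le> B g xs then F g xs else G g xs)"
  using oracle_pr_if_zero[OF oracle_pr_diff[OF assms(1,2)] assms(3,4)] by simp

lemma oracle_pr_min:
  assumes "oracle_pr n F" "oracle_pr n G"
  shows "oracle_pr n (\<lambda>g xs. min (F g xs) (G g xs))"
  by (rule oracle_pr_cong[OF oracle_pr_diff[OF assms(1) oracle_pr_diff[OF assms]]]) simp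

lemma oracle_pr_sum:
  assumes "oracle_pr (Suc n) H" "oracle_pr n E"
  shows "oracle_pr n (\<lambda>g xs. \<Sum>j<E g xs. H g (j # xs))"
proof -
  have step: "oracle_pr (Suc (Suc n)) (\<lambda>g ys. H g (ys ! 0 # drop 2 ys))"
  proof (rule oracle_pr_cong[OF oracle_pr_select[OF assms(1), of "0 # [2..<2 + n]"]])
    fix g and ys :: "nat list"
    assume "length ys = Suc (Suc n)"
    then have "map ((!) ys) [2..<2 + n] = drop 2 ys" by (intro nth_equalityI) (auto simp del: upt_Suc)
    then show "H g (map ((!) ys) (0 # [2..<2 + n])) = H g (ys ! 0 # drop 2 ys)" by simp
  qed auto
  have sum_rec: "rec_nat 0 (\<lambda>m r. h m + r) a = (\<Sum>j<a. h j)" for h and a :: nat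
    by (induction a) (simp_all add: add.commute)
  show ?thesis
    by (rule oracle_pr_cong[OF oracle_pr_rec[OF oracle_pr_const[of n 0] oracle_pr_add[OF step oracle_pr_snd] assms(2)]])
      (simp add: sum_rec)
qed

lemma oracle_pr_mod2:
  assumes "oracle_pr n F"
  shows "oracle_pr n (\<lambda>g xs. F g xs mod 2)"
proof -
  have "rec_nat 0 (\<lambda>m r. 1 - r) a = a mod 2" for a :: nat by (induction a) (auto simp: mod_Suc)
  with oracle_pr_rec[OF oracle_pr_const[of n 0] oracle_pr_diff[OF oracle_pr_const[of _ 1] oracle_pr_snd] assms]
  show ?thesis by simp
qed

lemma oracle_pr_div2:
  assumes "oracle_pr n F"
  shows "oracle_pr n (\<lambda>g xs. F g xs div 2)"
proof -
  have "(\<Sum>j<a. j mod 2) = a div 2" for a :: nat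
    by (induction a) (simp_all, presburger)
  with oracle_pr_sum[OF oracle_pr_mod2[OF oracle_pr_fst] assms] show ?thesis by simp
qed

lemma oracle_pr_triangle:
  assumes "oracle_pr n F"
  shows "oracle_pr n (\<lambda>g xs. triangle (F g xs))"
proof -
  have "(\<Sum>j<a. Suc j) = triangle a" for a by (induction a) simp_all
  with oracle_pr_sum[OF oracle_pr_succ[OF oracle_pr_fst] assms] show ?thesis by simp
qed

lemma oracle_pr_prod_encode:
  assumes "oracle_pr n F" "oracle_pr n G"
  shows "oracle_pr n (\<lambda>g xs. prod_encode (F g xs, G g xs))"
  using oracle_pr_add[OF oracle_pr_triangle[OF oracle_pr_add[OF assms]] assms(1)]
  by (simp add: prod_encode_def)

section \<open>Binary strings and the Cantor set\<close>

lemma str_code_eq_0_iff: "str_code s = 0 \<longleftrightarrow> s = []"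
  by (cases s) auto

lemma inj_str_code: "inj str_code"
proof (rule injI)
  show "str_code s = str_code t \<Longrightarrow> s = t" for s t
  proof (induction s arbitrary: t)
    case Nil
    then show ?case by (metis str_code_eq_0_iff)
  next
    case (Cons a s)
    then obtain b t' where t: "t = b # t'" by (metis str_code_eq_0_iff list.distinct(1) neq_Nil_conv)
    with Cons.prems have "str_code (a # s) mod 2 = str_code (b # t') mod 2" by simp
    then have "a = b" by (cases a; cases b) simp_all
    with Cons t show ?case by simp
  qed
qed

lemma surj_str_code: "surj str_code"
proof -
  have "\<exists>s. str_code s = k" for k
  proof (induction k rule: less_induct)
    case (less k)
    show ?case
    proof (cases k)
      case (Suc m)
      then obtain s where "str_code s = m div 2" using less by fastforce
      then have "str_code (odd m # s) = k" using Suc by simp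
      then show ?thesis ..
    qed (auto intro: exI[of _ "[]"])
  qed
  then show ?thesis by (metis surjI)
qed

lemma length_le_str_code: "length s \<le> str_code s"
  by (induction s) auto

lemma chi_str_code: "chi T (str_code s) = (if s \<in> T then 1 else 0)"
  unfolding chi_def using inj_str_code by (auto dest: injD)

text \<open>The Cantor interval of s is [cantor_lo s, cantor_lo s + 3 * cantor_third s]; it contains
  cantor X for every X extending s, and its open middle third is a gap of the Cantor set.\<close>

fun cantor_lo :: "bool list \<Rightarrow> real" where
  "cantor_lo [] = 1/3"
| "cantor_lo (b # s) = 1/3 + (if b then 2/9 else 0) + (cantor_lo s - 1/3) / 3"

definition cantor_third :: "bool list \<Rightarrow> real" where
  "cantor_third s = 1 / 3 ^ (length s + 2)"

lemma cantor_third_Cons: "cantor_third (b # s) = cantor_third s / 3"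
  by (simp add: cantor_third_def)

lemma cantor_third_snoc: "cantor_third (s @ [b]) = cantor_third s / 3"
  by (simp add: cantor_third_def)

lemma cantor_third_pos: "0 < cantor_third s"
  by (simp add: cantor_third_def)

lemma cantor_third_le: "cantor_third s \<le> 1/9"
  by (simp add: cantor_third_def)

lemma cantor_lo_snoc: "cantor_lo (s @ [b]) = cantor_lo s + (if b then 2 * cantor_third s else 0)"
  by (induction s) (auto simp: cantor_third_def)

lemma cantor_lo_bounds: "1/3 \<le> cantor_lo s \<and> cantor_lo s + 3 * cantor_third s \<le> 2/3"
proof (induction s)
  case (Cons b s)
  then show ?case by (cases b) (auto simp: cantor_third_Cons field_simps)
qed (simp add: cantor_third_def)

definition cantor_digit :: "(nat \<Rightarrow> bool) \<Rightarrow> nat \<Rightarrow> real" where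
  "cantor_digit X n = (if X n then 2 else 0) / 3 ^ (n + 2)"

lemma cantor_eq_suminf: "cantor X = 1/3 + suminf (cantor_digit X)"
  unfolding cantor_def cantor_digit_def by simp

lemma cantor_digit_le: "cantor_digit X n \<le> 2/9 * (1/3) ^ n"
  by (simp add: cantor_digit_def power_add field_simps)

lemma summable_cantor_digit: "summable (cantor_digit X)"
  by (rule summable_comparison_test'[OF summable_mult[OF summable_geometric], of _ 0])
    (auto simp: cantor_digit_def intro: order.trans[OF _ cantor_digit_le])

lemma cantor_bounds: "1/3 \<le> cantor X \<and> cantor X \<le> 2/3"
proof -
  have geo: "(\<lambda>n. 2/9 * (1/3::real) ^ n) sums (1/3)"
    using sums_mult[OF geometric_sums[of "1/3::real"], of "2/9"] by simp
  have "suminf (cantor_digit X) \<le> (\<Sum>n. 2/9 * (1/3::real) ^ n)"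
    by (rule suminf_le[OF cantor_digit_le summable_cantor_digit sums_summable[OF geo]])
  also have "\<dots> = 1/3" by (rule sums_unique[OF geo, symmetric])
  moreover have "0 \<le> suminf (cantor_digit X)"
    by (rule suminf_nonneg[OF summable_cantor_digit]) (simp add: cantor_digit_def)
  ultimately show ?thesis unfolding cantor_eq_suminf by simp
qed

lemma cantor_shift: "cantor X = 1/3 + (if X 0 then 2/9 else 0) + (cantor (\<lambda>n. X (Suc n)) - 1/3) / 3"
proof -
  have digit_Suc: "cantor_digit X (Suc n) = 1/3 * cantor_digit (\<lambda>n. X (Suc n)) n" for n
    by (simp add: cantor_digit_def)
  have "(\<Sum>n. cantor_digit X (Suc n)) = 1/3 * suminf (cantor_digit (\<lambda>n. X (Suc n)))"
    unfolding digit_Suc by (rule suminf_mult[OF summable_cantor_digit])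
  moreover have "cantor_digit X 0 = (if X 0 then 2/9 else 0)" by (simp add: cantor_digit_def)
  ultimately show ?thesis
    unfolding cantor_eq_suminf using suminf_split_head[OF summable_cantor_digit[of X]] by simp
qed

lemma map_upt_Suc_shift: "map X [0..<Suc n] = X 0 # map (\<lambda>n. X (Suc n)) [0..<n]"
  by (simp add: map_upt_Suc del: upt_Suc)

lemma cantor_diff_cantor_lo_Cons:
  "X 0 = b \<Longrightarrow> cantor X - cantor_lo (b # s) = (cantor (\<lambda>n. X (Suc n)) - cantor_lo s) / 3"
  using cantor_shift[of X] by (simp add: field_simps)

lemma cantor_in_interval:
  assumes "map X [0..<length s] = s"
  shows "cantor_lo s \<le> cantor X \<and> cantor X \<le> cantor_lo s + 3 * cantor_third s"
  using assms
proof (induction s arbitrary: X)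
  case Nil
  then show ?case using cantor_bounds[of X] by (simp add: cantor_third_def)
next
  case (Cons b s)
  then have "X 0 = b" "map (\<lambda>n. X (Suc n)) [0..<length s] = s"
    using map_upt_Suc_shift[of X "length s"] by auto
  then have "cantor_lo s \<le> cantor (\<lambda>n. X (Suc n))"
    "cantor (\<lambda>n. X (Suc n)) \<le> cantor_lo s + 3 * cantor_third s"
    using Cons.IH by auto
  with cantor_diff_cantor_lo_Cons[of X b s, OF \<open>X 0 = b\<close>] show ?case
    unfolding cantor_third_Cons by argo
qed

lemma cantor_outside_interval:
  assumes "map X [0..<length s] \<noteq> s"
  shows "cantor X \<le> cantor_lo s - 3 * cantor_third s \<or> cantor_lo s + 6 * cantor_third s \<le> cantor X"
  using assms
proof (induction s arbitrary: X)
  case (Cons b s)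
  let ?Y = "\<lambda>n. X (Suc n)"
  have X: "cantor X = 1/3 + (if X 0 then 2/9 else 0) + (cantor ?Y - 1/3) / 3"
    by (rule cantor_shift)
  show ?case
  proof (cases "X 0 = b")
    case True
    with Cons.prems have "map ?Y [0..<length s] \<noteq> s" using map_upt_Suc_shift[of X "length s"] by auto
    with Cons.IH[of ?Y] cantor_diff_cantor_lo_Cons[of X b s, OF True] show ?thesis
      unfolding cantor_third_Cons by argo
  next
    case False
    have "1/3 \<le> cantor ?Y" "cantor ?Y \<le> 2/3" using cantor_bounds[of ?Y] by auto
    moreover have "1/3 \<le> cantor_lo s" "cantor_lo s + 3 * cantor_third s \<le> 2/3"
      using cantor_lo_bounds[of s] by auto
    moreover have "0 < cantor_third s" "cantor_third s \<le> 1/9"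
      by (rule cantor_third_pos, rule cantor_third_le)
    ultimately show ?thesis using X False unfolding cantor_third_Cons by (cases b; simp; argo)
  qed
qed simp

lemma cantor_not_in_gap:
  "\<not> (cantor_lo s + cantor_third s < cantor X \<and> cantor X < cantor_lo s + 2 * cantor_third s)"
proof (cases "map X [0..<length s] = s")
  case True
  let ?t = "s @ [X (length s)]"
  have "map X [0..<length ?t] = ?t" using True by simp
  then show ?thesis
    using cantor_in_interval[of X ?t]
    by (cases "X (length s)") (auto simp: cantor_lo_snoc cantor_third_snoc)
next
  case False
  then show ?thesis using cantor_outside_interval[of X s] cantor_third_pos[of s] by auto
qed

lemma gap_free_in_cantor_set:
  assumes x: "1/3 \<le> x" "x \<le> 2/3"
    and gap_free: "\<And>s. \<not> (cantor_lo s + cantor_third s < x \<and> x < cantor_lo s + 2 * cantor_third s)"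
  shows "x \<in> cantor_set"
proof -
  define S where "S = rec_nat [] (\<lambda>n s. s @ [cantor_lo s + 2 * cantor_third s \<le> x])"
  have S_Suc: "S (Suc n) = S n @ [cantor_lo (S n) + 2 * cantor_third (S n) \<le> x]" for n
    by (simp add: S_def)
  have length_S: "length (S n) = n" for n
    by (induction n) (simp_all add: S_def)
  have S_interval: "cantor_lo (S n) \<le> x \<and> x \<le> cantor_lo (S n) + 3 * cantor_third (S n)" for n
  proof (induction n)
    case 0
    then show ?case using x by (simp add: S_def cantor_third_def)
  next
    case (Suc n)
    then show ?case
      using gap_free[of "S n"] by (auto simp: S_Suc cantor_lo_snoc cantor_third_snoc)
  qed
  define X where "X n = S (Suc n) ! n" for n
  have prefix_X: "map X [0..<n] = S n" for n
  proof (induction n)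
    case (Suc n)
    then show ?case by (simp add: X_def S_Suc nth_append length_S)
  qed (simp add: S_def)
  have close: "\<bar>cantor X - x\<bar> \<le> (1/3) ^ n" for n
  proof -
    have "\<bar>cantor X - x\<bar> \<le> 3 * cantor_third (S n)"
      using cantor_in_interval[of X "S n"] S_interval[of n] prefix_X[of n] by (auto simp: length_S)
    also have "\<dots> \<le> (1/3) ^ n"
      by (simp add: cantor_third_def length_S power_add field_simps)
    finally show ?thesis .
  qed
  have "cantor X = x"
  proof (rule ccontr)
    assume "cantor X \<noteq> x"
    then obtain n where "(1/3::real) ^ n < \<bar>cantor X - x\<bar>"
      using real_arch_pow_inv[of "\<bar>cantor X - x\<bar>" "1/3"] by auto
    with close[of n] show False by linarith
  qed
  then show ?thesis unfolding cantor_set_def by (metis rangeI)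
qed

section \<open>The function f_T\<close>

definition tent :: "real \<Rightarrow> real \<Rightarrow> real \<Rightarrow> real" where
  "tent a b x = max 0 (min (x - a) (b - x))"

lemma tent_nonneg: "0 \<le> tent a b x"
  by (simp add: tent_def)

lemma tent_eq_0_iff: "tent a b x = 0 \<longleftrightarrow> \<not> (a < x \<and> x < b)"
  by (auto simp: tent_def min_def max_def)

lemma tent_lipschitz: "\<bar>tent a b x - tent a b y\<bar> \<le> \<bar>x - y\<bar>"
  by (auto simp: tent_def min_def max_def abs_if)

lemma tent_le_half_width: "a \<le> b \<Longrightarrow> tent a b x \<le> (b - a) / 2"
  by (auto simp: tent_def min_def max_def field_simps)

lemma tent_le_one_minus: "b \<le> 1 \<Longrightarrow> x \<le> 1 \<Longrightarrow> tent a b x \<le> 1 - x"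
  by (simp add: tent_def)

lemma tent_divide:
  assumes "d > 0"
  shows "tent (a / d) (b / d) (x / d) = tent a b x / d"
proof -
  have "min ((x - a) / d) ((b - x) / d) = min (x - a) (b - x) / d"
    using assms by (auto simp: min_def divide_le_cancel)
  moreover have "max 0 (z / d) = max 0 z / d" for z
    using assms by (auto simp: max_def divide_le_0_iff zero_le_divide_iff)
  ultimately show ?thesis unfolding tent_def by (simp add: diff_divide_distrib)
qed

lemma tent_of_nat: "tent (real a) (real b) (real c) = real (min (c - a) (b - c))"
  by (cases "a \<le> c \<and> c \<le> b") (auto simp: tent_def min_def of_nat_diff)

lemma tent_of_nat_divide:
  "d > 0 \<Longrightarrow> tent (real a / d) (real b / d) (real c / d) = real (min (c - a) (b - c)) / d"
  by (simp add: tent_divide tent_of_nat)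

text \<open>For s \<in> T the bump of s sits on the middle third of the interval of s; for s \<notin> T it
  covers an open neighbourhood of the whole interval, so that no point with prefix s survives.\<close>

definition bump_lo :: "bool list set \<Rightarrow> bool list \<Rightarrow> real" where
  "bump_lo T s = (if s \<in> T then cantor_lo s + cantor_third s else cantor_lo s - cantor_third s)"

definition bump_hi :: "bool list set \<Rightarrow> bool list \<Rightarrow> real" where
  "bump_hi T s = (if s \<in> T then cantor_lo s + 2 * cantor_third s else cantor_lo s + 4 * cantor_third s)"

definition tree_bump :: "bool list set \<Rightarrow> real \<Rightarrow> nat \<Rightarrow> real" where
  "tree_bump T x k = (1/2) ^ (k + 2) * tent (bump_lo T (inv str_code k)) (bump_hi T (inv str_code k)) x"

definition outer_bump :: "real \<Rightarrow> real" where
  "outer_bump x = (tent 0 (1/3) x + tent (2/3) 1 x) / 4"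

definition excess :: "bool list set \<Rightarrow> real \<Rightarrow> real" where
  "excess T x = outer_bump x + (\<Sum>k. tree_bump T x k)"

definition tree_fun :: "bool list set \<Rightarrow> real \<Rightarrow> real" where
  "tree_fun T x = x + excess T x"

lemma bump_bounds: "0 \<le> bump_lo T s \<and> bump_lo T s < bump_hi T s \<and> bump_hi T s \<le> 1"
  using cantor_lo_bounds[of s] cantor_third_pos[of s] cantor_third_le[of s]
  unfolding bump_lo_def bump_hi_def by auto

lemma bump_weights_sums: "(\<lambda>k. (1/2::real) ^ (k + 2)) sums (1/2)"
  using sums_mult[OF geometric_sums[of "1/2::real"], of "1/4"] by (simp add: power_add)

lemma tree_bump_nonneg: "0 \<le> tree_bump T x k"
  by (simp add: tree_bump_def tent_nonneg)

lemma tree_bump_le: "tree_bump T x k \<le> (1/2) ^ (k + 2)"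
proof -
  let ?s = "inv str_code k"
  have b: "0 \<le> bump_lo T ?s" "bump_lo T ?s \<le> bump_hi T ?s" "bump_hi T ?s \<le> 1"
    using bump_bounds[of T ?s] by auto
  with tent_le_half_width[OF b(2), of x]
  have "tent (bump_lo T ?s) (bump_hi T ?s) x \<le> 1" by argo
  then show ?thesis unfolding tree_bump_def by (simp add: mult_left_le)
qed

lemma summable_tree_bump: "summable (tree_bump T x)"
  by (rule summable_comparison_test'[OF sums_summable[OF bump_weights_sums], of 0])
    (metis real_norm_def abs_of_nonneg tree_bump_nonneg tree_bump_le)

lemma tree_bump_lipschitz: "\<bar>tree_bump T x k - tree_bump T y k\<bar> \<le> (1/2) ^ (k + 2) * \<bar>x - y\<bar>"
  unfolding tree_bump_def right_diff_distrib[symmetric] abs_mult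
  by (simp add: mult_left_mono tent_lipschitz)

lemma suminf_tree_bump_lipschitz:
  "\<bar>(\<Sum>k. tree_bump T x k) - (\<Sum>k. tree_bump T y k)\<bar> \<le> \<bar>x - y\<bar> / 2"
proof -
  have weights: "(\<lambda>k. (1/2) ^ (k + 2) * \<bar>x - y\<bar>) sums (1/2 * \<bar>x - y\<bar>)"
    by (rule sums_mult2[OF bump_weights_sums])
  have diffs: "summable (\<lambda>k. \<bar>tree_bump T x k - tree_bump T y k\<bar>)"
    by (rule summable_comparison_test'[OF sums_summable[OF weights], of 0])
      (metis real_norm_def abs_abs tree_bump_lipschitz)
  have "\<bar>(\<Sum>k. tree_bump T x k) - (\<Sum>k. tree_bump T y k)\<bar> = \<bar>\<Sum>k. tree_bump T x k - tree_bump T y k\<bar>"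
    by (simp add: suminf_diff[OF summable_tree_bump summable_tree_bump])
  also have "\<dots> \<le> (\<Sum>k. \<bar>tree_bump T x k - tree_bump T y k\<bar>)"
    by (rule summable_rabs[OF diffs])
  also have "\<dots> \<le> 1/2 * \<bar>x - y\<bar>"
    using suminf_le[OF tree_bump_lipschitz diffs sums_summable[OF weights]] sums_unique[OF weights] by simp
  finally show ?thesis by simp
qed

lemma excess_lipschitz: "\<bar>excess T x - excess T y\<bar> \<le> \<bar>x - y\<bar>"
proof -
  have "\<bar>outer_bump x - outer_bump y\<bar> \<le> \<bar>x - y\<bar> / 2"
    using tent_lipschitz[of 0 "1/3" x y] tent_lipschitz[of "2/3" 1 x y] unfolding outer_bump_def by argo
  then show ?thesis using suminf_tree_bump_lipschitz[of T x y] unfolding excess_def by argo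
qed

lemma excess_nonneg: "0 \<le> excess T x"
  unfolding excess_def outer_bump_def
  using suminf_nonneg[OF summable_tree_bump tree_bump_nonneg] tent_nonneg[of 0 "1/3" x] tent_nonneg[of "2/3" 1 x]
  by simp

lemma excess_le:
  assumes "x \<le> 1"
  shows "excess T x \<le> 1 - x"
proof -
  have weights: "(\<lambda>k. (1/2) ^ (k + 2) * (1 - x)) sums (1/2 * (1 - x))"
    by (rule sums_mult2[OF bump_weights_sums])
  have "tree_bump T x k \<le> (1/2) ^ (k + 2) * (1 - x)" for k
    unfolding tree_bump_def using tent_le_one_minus[OF _ assms] bump_bounds
    by (simp add: mult_left_mono)
  then have "(\<Sum>k. tree_bump T x k) \<le> (\<Sum>k. (1/2) ^ (k + 2) * (1 - x))"
    by (rule suminf_le[OF _ summable_tree_bump sums_summable[OF weights]])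
  also have "\<dots> = 1/2 * (1 - x)"
    by (rule sums_unique[OF weights, symmetric])
  moreover have "outer_bump x \<le> (1 - x) / 2"
    using tent_le_one_minus[of "1/3" x 0] tent_le_one_minus[of 1 x "2/3"] assms unfolding outer_bump_def by simp
  ultimately show ?thesis unfolding excess_def by simp
qed

lemma excess_eq_0_iff:
  "excess T x = 0 \<longleftrightarrow>
     tent 0 (1/3) x = 0 \<and> tent (2/3) 1 x = 0 \<and> (\<forall>s. tent (bump_lo T s) (bump_hi T s) x = 0)"
proof -
  have "(\<Sum>k. tree_bump T x k) = 0 \<longleftrightarrow> (\<forall>k. tree_bump T x k = 0)"
    by (rule suminf_eq_zero_iff[OF summable_tree_bump tree_bump_nonneg])
  also have "\<dots> \<longleftrightarrow> (\<forall>k. tent (bump_lo T (inv str_code k)) (bump_hi T (inv str_code k)) x = 0)"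
    by (simp add: tree_bump_def)
  also have "\<dots> \<longleftrightarrow> (\<forall>s. tent (bump_lo T s) (bump_hi T s) x = 0)"
    by (metis inv_f_f[OF inj_str_code])
  finally show ?thesis
    unfolding excess_def outer_bump_def
    using suminf_nonneg[OF summable_tree_bump tree_bump_nonneg, of T x]
      tent_nonneg[of 0 "1/3" x] tent_nonneg[of "2/3" 1 x]
    by argo
qed

lemma tree_fun_lipschitz: "\<bar>tree_fun T x - tree_fun T y\<bar> \<le> 2 * \<bar>x - y\<bar>"
  using excess_lipschitz[of T x y] unfolding tree_fun_def by argo

lemma tree_fun_mono: "x \<le> y \<Longrightarrow> tree_fun T x \<le> tree_fun T y"
  using excess_lipschitz[of T x y] unfolding tree_fun_def by argo

lemma tree_fun_ge: "x \<le> tree_fun T x"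
  using excess_nonneg[of T x] by (simp add: tree_fun_def)

lemma tree_fun_le_1: "x \<le> 1 \<Longrightarrow> tree_fun T x \<le> 1"
  using excess_le[of x T] by (simp add: tree_fun_def)

lemma gap_subset_bump:
  "cantor_lo s + cantor_third s < x \<Longrightarrow> x < cantor_lo s + 2 * cantor_third s \<Longrightarrow>
   bump_lo T s < x \<and> x < bump_hi T s"
  using cantor_third_pos[of s] by (auto simp: bump_lo_def bump_hi_def)

lemma excess_endpoints:
  assumes "x \<in> {0, 1}"
  shows "excess T x = 0"
proof -
  have "\<not> (bump_lo T s < x \<and> x < bump_hi T s)" for s
    using bump_bounds[of T s] assms by auto
  then show ?thesis using assms by (auto simp: excess_eq_0_iff tent_eq_0_iff)
qed

lemma excess_path:
  assumes X: "X \<in> paths T"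
  shows "excess T (cantor X) = 0"
proof -
  have "\<not> (bump_lo T s < cantor X \<and> cantor X < bump_hi T s)" for s
  proof (cases "s \<in> T")
    case True
    then show ?thesis using cantor_not_in_gap[of s X] by (simp add: bump_lo_def bump_hi_def)
  next
    case False
    have "map X [0..<length s] \<in> T" using X unfolding paths_def by blast
    with False have "map X [0..<length s] \<noteq> s" by auto
    moreover have "bump_lo T s = cantor_lo s - cantor_third s" "bump_hi T s = cantor_lo s + 4 * cantor_third s"
      using False by (simp_all add: bump_lo_def bump_hi_def)
    ultimately show ?thesis
      using cantor_outside_interval[of X s] cantor_third_pos[of s] by argo
  qed
  moreover have "tent 0 (1/3) (cantor X) = 0" "tent (2/3) 1 (cantor X) = 0"
    using cantor_bounds[of X] by (simp_all add: tent_eq_0_iff)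
  ultimately show ?thesis by (simp add: excess_eq_0_iff tent_eq_0_iff)
qed

lemma excess_eq_0_imp_path:
  assumes x: "0 < x" "x < 1" and "excess T x = 0"
  shows "\<exists>X. cantor X = x \<and> X \<in> paths T"
proof -
  have outside: "\<not> (bump_lo T s < x \<and> x < bump_hi T s)" for s
    using \<open>excess T x = 0\<close> by (simp add: excess_eq_0_iff tent_eq_0_iff)
  have "1/3 \<le> x" "x \<le> 2/3"
    using \<open>excess T x = 0\<close> x by (auto simp: excess_eq_0_iff tent_eq_0_iff)
  moreover have "\<not> (cantor_lo s + cantor_third s < x \<and> x < cantor_lo s + 2 * cantor_third s)" for s
    using outside gap_subset_bump by blast
  ultimately obtain X where X: "cantor X = x"
    using gap_free_in_cantor_set unfolding cantor_set_def by blast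
  have "map X [0..<n] \<in> T" for n
  proof (rule ccontr)
    let ?s = "map X [0..<n]"
    assume "?s \<notin> T"
    moreover have "cantor_lo ?s \<le> x \<and> x \<le> cantor_lo ?s + 3 * cantor_third ?s"
      using cantor_in_interval[of X ?s] X by simp
    ultimately show False
      using outside[of ?s] cantor_third_pos[of ?s] by (auto simp: bump_lo_def bump_hi_def)
  qed
  with X show ?thesis unfolding paths_def by blast
qed

lemma tree_fun_eq_self_iff:
  assumes "x \<in> {0..1}"
  shows "tree_fun T x = x \<longleftrightarrow>
    x = 0 \<or> x = 1 \<or> (x \<in> cantor_set \<and> (\<exists>X. cantor X = x \<and> X \<in> paths T))"
proof -
  have "tree_fun T x = x \<longleftrightarrow> excess T x = 0" by (simp add: tree_fun_def)
  then show ?thesis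
    using assms excess_endpoints[of x T] excess_path excess_eq_0_imp_path[of x T]
    unfolding cantor_set_def by force
qed

section \<open>Rational approximations\<close>

definition cantor_num :: "bool list \<Rightarrow> nat" where
  "cantor_num s = 3 + (\<Sum>j<length s. (if s ! j then 4 else 2) * 3 ^ (length s - j))"

lemma cantor_num_Cons: "cantor_num (b # s) = cantor_num s + (if b then 4 else 2) * 3 ^ (length s + 1)"
  unfolding cantor_num_def length_Cons by (subst sum.lessThan_Suc_shift) (simp del: sum.lessThan_Suc)

lemma cantor_lo_eq_num: "cantor_lo s = real (cantor_num s) / 3 ^ (length s + 2)"
proof (induction s)
  case (Cons b s)
  then show ?case by (simp add: cantor_num_Cons field_simps)
qed (simp add: cantor_num_def)

text \<open>Length and Cantor numerator of a string, read off its code digit by digit; the sums may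
  run up to the code itself because it bounds the length.\<close>

definition code_tl :: "nat \<Rightarrow> nat" where
  "code_tl k = (k - 1) div 2"

definition code_drop :: "nat \<Rightarrow> nat \<Rightarrow> nat" where
  "code_drop j k = (code_tl ^^ j) k"

definition code_length :: "nat \<Rightarrow> nat" where
  "code_length k = (\<Sum>j<k. if code_drop j k = 0 then 0 else 1)"

definition code_cantor_num :: "nat \<Rightarrow> nat" where
  "code_cantor_num k = 3 + (\<Sum>j<k. if code_drop j k = 0 then 0
     else (if code_drop j k mod 2 = 0 then 4 else 2) * 3 ^ (code_length k - j))"

lemma code_drop_str_code: "code_drop j (str_code s) = str_code (drop j s)"
proof (induction j arbitrary: s)
  case (Suc j)
  have "code_tl (str_code t) = str_code (tl t)" for t
    by (cases t) (auto simp: code_tl_def)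
  with Suc show ?case by (simp add: code_drop_def drop_Suc tl_drop)
qed (simp add: code_drop_def)

lemma sum_lessThan_if_less: "(\<Sum>j<k. if j < n then f j else 0) = (\<Sum>j<min k n. f j)" for k n :: nat
  by (induction k) (auto simp: min_def)

lemma code_length_str_code: "code_length (str_code s) = length s"
proof -
  have "code_length (str_code s) = (\<Sum>j<str_code s. if j < length s then 1 else 0)"
    unfolding code_length_def by (rule sum.cong) (auto simp: code_drop_str_code str_code_eq_0_iff)
  then show ?thesis using length_le_str_code[of s] by (simp add: sum_lessThan_if_less min_def)
qed

lemma code_length_le: "code_length k \<le> k"
  using sum_mono[of "{..<k}" "\<lambda>j. if code_drop j k = 0 then 0 else 1" "\<lambda>j. 1::nat"]
  by (simp add: code_length_def)

lemma code_cantor_num_str_code: "code_cantor_num (str_code s) = cantor_num s"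
proof -
  have "code_drop j (str_code s) mod 2 = (if s ! j then 0 else 1)" if "j < length s" for j
    using that by (simp add: code_drop_str_code Cons_nth_drop_Suc[symmetric])
  then have "code_cantor_num (str_code s) = 3 + (\<Sum>j<str_code s. if j < length s
      then (if s ! j then 4 else 2) * 3 ^ (length s - j) else 0)"
    unfolding code_cantor_num_def
    by (intro arg_cong[where f = "\<lambda>x. 3 + x"] sum.cong)
      (auto simp: code_drop_str_code code_length_str_code str_code_eq_0_iff)
  then show ?thesis
    using length_le_str_code[of s] by (simp add: sum_lessThan_if_less min_def cantor_num_def)
qed

text \<open>Numerators, over r * 3 ^ (length s + 2) resp. r * 6 ^ (n + 2), of the bumps and of the
  n-th partial sum of tree_fun at the rational p / r.\<close>

definition lo_num :: "(nat \<Rightarrow> nat) \<Rightarrow> nat \<Rightarrow> nat" where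
  "lo_num g k = (if g k = 0 then code_cantor_num k - 1 else code_cantor_num k + 1)"

definition hi_num :: "(nat \<Rightarrow> nat) \<Rightarrow> nat \<Rightarrow> nat" where
  "hi_num g k = (if g k = 0 then code_cantor_num k + 4 else code_cantor_num k + 2)"

definition bump_num :: "(nat \<Rightarrow> nat) \<Rightarrow> nat \<Rightarrow> nat \<Rightarrow> nat \<Rightarrow> nat" where
  "bump_num g k p r =
     min (p * 3 ^ (code_length k + 2) - lo_num g k * r) (hi_num g k * r - p * 3 ^ (code_length k + 2))"

definition outer_num :: "nat \<Rightarrow> nat \<Rightarrow> nat" where
  "outer_num p r = min (3 * p) (r - 3 * p) + min (3 * p - 2 * r) (3 * r - 3 * p)"

definition approx_num :: "(nat \<Rightarrow> nat) \<Rightarrow> nat \<Rightarrow> nat \<Rightarrow> nat \<Rightarrow> nat" where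
  "approx_num g n p r = p * 6 ^ (n + 2) + outer_num p r * (3 * 6 ^ n) +
     (\<Sum>k<n. bump_num g k p r * 3 ^ (n - code_length k) * 2 ^ (n - k))"

definition approx_den :: "nat \<Rightarrow> nat \<Rightarrow> nat" where
  "approx_den n r = r * 6 ^ (n + 2)"

lemma bump_lo_hi_eq_num:
  "bump_lo T s = real (lo_num (chi T) (str_code s)) / 3 ^ (length s + 2)"
  "bump_hi T s = real (hi_num (chi T) (str_code s)) / 3 ^ (length s + 2)"
proof -
  have "cantor_num s \<ge> 3" by (simp add: cantor_num_def)
  then have "real (cantor_num s - 1) = real (cantor_num s) - 1" by simp
  then show "bump_lo T s = real (lo_num (chi T) (str_code s)) / 3 ^ (length s + 2)"
    "bump_hi T s = real (hi_num (chi T) (str_code s)) / 3 ^ (length s + 2)"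
    unfolding bump_lo_def bump_hi_def lo_num_def hi_num_def chi_str_code code_cantor_num_str_code
      cantor_lo_eq_num cantor_third_def
    by (auto simp: add_divide_distrib diff_divide_distrib)
qed

lemma outer_bump_rat:
  assumes "r > 0"
  shows "outer_bump (real p / real r) = real (outer_num p r) / (12 * real r)"
proof -
  have d: "3 * real r > 0" using assms by simp
  have x: "real p / real r = real (3 * p) / (3 * real r)" using assms by simp
  have "tent 0 (1/3) (real p / real r) = real (min (3 * p) (r - 3 * p)) / (3 * real r)"
    using tent_of_nat_divide[OF d, of 0 r "3 * p"] assms unfolding x by simp
  moreover have "tent (2/3) 1 (real p / real r) = real (min (3 * p - 2 * r) (3 * r - 3 * p)) / (3 * real r)"
    using tent_of_nat_divide[OF d, of "2 * r" "3 * r" "3 * p"] assms unfolding x by simp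
  ultimately show ?thesis using assms by (simp add: outer_bump_def outer_num_def field_simps)
qed

lemma tree_bump_rat:
  assumes "r > 0" "k < n"
  shows "tree_bump T (real p / real r) k =
    real (bump_num (chi T) k p r * 3 ^ (n - code_length k) * 2 ^ (n - k)) / (real r * 6 ^ (n + 2))"
proof -
  let ?s = "inv str_code k" and ?L = "code_length k"
  have s: "str_code ?s = k" by (rule surj_f_inv_f[OF surj_str_code])
  then have L: "length ?s = ?L" using code_length_str_code[of ?s] by simp
  have d: "real r * 3 ^ (?L + 2) > 0" using assms by simp
  have "tent (bump_lo T ?s) (bump_hi T ?s) (real p / real r) =
      tent (real (lo_num (chi T) k * r) / (real r * 3 ^ (?L + 2)))
        (real (hi_num (chi T) k * r) / (real r * 3 ^ (?L + 2)))
        (real (p * 3 ^ (?L + 2)) / (real r * 3 ^ (?L + 2)))"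
    using assms unfolding bump_lo_hi_eq_num s L by simp
  also have "\<dots> = real (bump_num (chi T) k p r) / (real r * 3 ^ (?L + 2))"
    unfolding tent_of_nat_divide[OF d] bump_num_def by simp
  finally have tent: "tent (bump_lo T ?s) (bump_hi T ?s) (real p / real r) =
      real (bump_num (chi T) k p r) / (real r * 3 ^ (?L + 2))" .
  have "?L \<le> n" using code_length_le[of k] assms by simp
  then have p3: "(3::real) ^ (n + 2) = 3 ^ (n - ?L) * 3 ^ (?L + 2)"
    by (simp add: power_add[symmetric])
  have p2: "(2::real) ^ (n + 2) = 2 ^ (n - k) * 2 ^ (k + 2)"
    using assms by (simp add: power_add[symmetric])
  have p6: "(6::real) ^ (n + 2) = 3 ^ (n + 2) * 2 ^ (n + 2)"
    by (simp add: power_mult_distrib[symmetric])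
  show ?thesis
    unfolding tree_bump_def tent p6 p3 p2 using assms by (simp add: field_simps power_divide)
qed

lemma approx_num_eq:
  assumes "r > 0"
  shows "real (approx_num (chi T) n p r) / real (approx_den n r) =
    real p / real r + outer_bump (real p / real r) + (\<Sum>k<n. tree_bump T (real p / real r) k)"
proof -
  have den: "real (approx_den n r) = real r * 6 ^ (n + 2)" by (simp add: approx_den_def)
  have "real (outer_num p r * (3 * 6 ^ n)) / (real r * 6 ^ (n + 2)) = outer_bump (real p / real r)"
    using assms unfolding outer_bump_rat[OF assms] by (simp add: field_simps power_add)
  moreover have "real (\<Sum>k<n. bump_num (chi T) k p r * 3 ^ (n - code_length k) * 2 ^ (n - k)) /
      (real r * 6 ^ (n + 2)) = (\<Sum>k<n. tree_bump T (real p / real r) k)"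
    unfolding of_nat_sum sum_divide_distrib by (rule sum.cong) (simp_all add: tree_bump_rat[OF assms])
  ultimately show ?thesis
    using assms unfolding den approx_num_def of_nat_add add_divide_distrib by simp
qed

lemma approx_num_error:
  assumes "r > 0"
  shows "\<bar>real (approx_num (chi T) n p r) / real (approx_den n r) - tree_fun T (real p / real r)\<bar> \<le> 1 / 2 ^ n"
proof -
  let ?x = "real p / real r"
  have tail: "(\<lambda>k. (1/2::real) ^ (k + n + 2)) sums ((1/2) ^ (n + 1))"
    using sums_mult[OF geometric_sums[of "1/2::real"], of "(1/2) ^ (n + 2)"]
    by (simp add: power_add mult.commute)
  have "tree_fun T ?x - real (approx_num (chi T) n p r) / real (approx_den n r) = (\<Sum>k. tree_bump T ?x (k + n))"
    unfolding approx_num_eq[OF assms] tree_fun_def excess_def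
      suminf_split_initial_segment[OF summable_tree_bump, of T ?x n]
    by simp
  moreover have "0 \<le> (\<Sum>k. tree_bump T ?x (k + n))"
    by (intro suminf_nonneg summable_ignore_initial_segment summable_tree_bump tree_bump_nonneg)
  moreover have "(\<Sum>k. tree_bump T ?x (k + n)) \<le> (\<Sum>k. (1/2) ^ (k + n + 2))"
    by (rule suminf_le[OF tree_bump_le summable_ignore_initial_segment[OF summable_tree_bump]
          sums_summable[OF tail]])
  moreover have "(\<Sum>k. (1/2::real) ^ (k + n + 2)) \<le> 1 / 2 ^ n"
    using sums_unique[OF tail] by (simp add: power_add field_simps)
  ultimately show ?thesis by (simp add: abs_minus_commute)
qed

text \<open>The largest s with triangle s \<le> i, found by bounded counting so that prod_decode becomes
  primitive recursive.\<close>

definition tri_root :: "nat \<Rightarrow> nat" where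
  "tri_root i = (\<Sum>t<Suc i. if triangle (Suc t) \<le> i then 1 else 0)"

lemma triangle_mono: "m \<le> n \<Longrightarrow> triangle m \<le> triangle n"
  by (induction n) (auto simp: le_Suc_eq)

lemma ex_triangle_bracket: "\<exists>s. triangle s \<le> i \<and> i < triangle (Suc s)"
proof (induction i)
  case (Suc i)
  then obtain s where "triangle s \<le> i" "i < triangle (Suc s)" by blast
  then show ?case
    by (cases "Suc i < triangle (Suc s)") (auto intro: exI[of _ s] exI[of _ "Suc s"])
qed (auto intro: exI[of _ 0])

lemma tri_root_eq:
  assumes "triangle s \<le> i" "i < triangle (Suc s)"
  shows "tri_root i = s"
proof -
  have "triangle (Suc t) \<le> i \<longleftrightarrow> t < s" for t
  proof
    assume "triangle (Suc t) \<le> i"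
    with assms(2) show "t < s" using triangle_mono[of "Suc s" "Suc t"] by (cases "t < s") auto
  next
    assume "t < s"
    with assms(1) show "triangle (Suc t) \<le> i" using triangle_mono[of "Suc t" s] by simp
  qed
  then have "tri_root i = (\<Sum>t<Suc i. if t < s then 1 else 0)"
    unfolding tri_root_def by presburger
  also have "\<dots> = s"
  proof -
    have "s \<le> triangle s" by (induction s) auto
    with assms(1) show ?thesis by (simp add: sum_lessThan_if_less min_def)
  qed
  finally show ?thesis .
qed

lemma prod_decode_tri_root:
  "prod_decode i = (i - triangle (tri_root i), tri_root i - (i - triangle (tri_root i)))"
proof -
  obtain s where s: "triangle s \<le> i" "i < triangle (Suc s)" using ex_triangle_bracket by blast
  then have "i = triangle s + (i - triangle s)" "i - triangle s \<le> s" by simp_all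
  then have "prod_decode i = (i - triangle s, s - (i - triangle s))"
    by (metis prod_decode_aux.simps prod_decode_triangle_add)
  then show ?thesis using tri_root_eq[OF s] by simp
qed

text \<open>The input i = prod_encode (a, b) is the rational int_decode a / (b + 1); when it is
  nonnegative, a is even and the numerator is a div 2. Conversely 2 * N codes the integer N.\<close>

definition approx_code :: "(nat \<Rightarrow> nat) \<Rightarrow> nat \<Rightarrow> nat \<Rightarrow> nat" where
  "approx_code g i n = (case prod_decode i of (a, b) \<Rightarrow>
     prod_encode (2 * approx_num g n (a div 2) (Suc b), approx_den n (Suc b) - 1))"

lemma int_decode_double: "int_decode (2 * m) = int m"
  by (simp add: int_decode_def sum_decode_def)

lemma rat_of_code_approx_code:
  assumes "prod_decode i = (a, b)"
  shows "rat_of_code (approx_code g i n) = real (approx_num g n (a div 2) (Suc b)) / real (approx_den n (Suc b))"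
proof -
  have "approx_den n (Suc b) > 0" by (simp add: approx_den_def)
  with assms show ?thesis by (simp add: approx_code_def rat_of_code_def int_decode_double)
qed

lemma rat_of_code_nonneg:
  assumes "prod_decode i = (a, b)" "0 \<le> rat_of_code i"
  shows "rat_of_code i = real (a div 2) / real (Suc b)"
proof -
  have r: "rat_of_code i = real_of_int (int_decode a) / real (Suc b)"
    using assms(1) by (simp add: rat_of_code_def)
  have "even a"
  proof (rule ccontr)
    assume "odd a"
    then have "int_decode a < 0" by (simp add: int_decode_def sum_decode_def)
    then have "rat_of_code i < 0" unfolding r by (simp add: divide_neg_pos)
    with assms(2) show False by simp
  qed
  then show ?thesis using r by (auto simp: int_decode_double elim: evenE)
qed

lemma approx_code_error:
  assumes "rat_of_code i \<in> {0..1}"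
  shows "\<bar>rat_of_code (approx_code (chi T) i n) - tree_fun T (rat_of_code i)\<bar> \<le> 1 / 2 ^ n"
proof -
  obtain a b where ab: "prod_decode i = (a, b)" by fastforce
  with assms have "rat_of_code i = real (a div 2) / real (Suc b)"
    by (intro rat_of_code_nonneg) auto
  then show ?thesis
    unfolding rat_of_code_approx_code[OF ab] using approx_num_error[of "Suc b" T n "a div 2"] by simp
qed

lemma is_code_tree_fun: "is_code (tree_fun T) (approx_code (chi T)) Suc"
  unfolding is_code_def
proof (intro conjI allI impI)
  fix m and x y :: real
  assume "\<bar>x - y\<bar> < 1 / 2 ^ Suc m"
  with tree_fun_lipschitz[of T x y] show "\<bar>tree_fun T x - tree_fun T y\<bar> < 1 / 2 ^ m"
    by simp
qed (rule approx_code_error)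

section \<open>Computability and the main result\<close>

lemmas oracle_pr_arith =
  oracle_pr_add oracle_pr_mult oracle_pr_diff oracle_pr_power oracle_pr_min oracle_pr_div2
  oracle_pr_mod2 oracle_pr_const oracle_pr_oracle oracle_pr_if_zero oracle_pr_if_le oracle_pr_triangle
  oracle_pr_prod_encode

lemma oracle_pr_code_drop:
  assumes "oracle_pr n J" "oracle_pr n K"
  shows "oracle_pr n (\<lambda>g xs. code_drop (J g xs) (K g xs))"
proof -
  have "rec_nat k (\<lambda>m r. (r - 1) div 2) j = code_drop j k" for j k
    by (induction j) (simp_all add: code_drop_def code_tl_def)
  with oracle_pr_rec[OF assms(2) oracle_pr_div2[OF oracle_pr_diff[OF oracle_pr_snd oracle_pr_const[of _ 1]]] assms(1)]
  show ?thesis by simp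
qed

lemma oracle_pr_code_length:
  assumes "oracle_pr n K"
  shows "oracle_pr n (\<lambda>g xs. code_length (K g xs))"
proof -
  have "oracle_pr n (\<lambda>g xs. \<Sum>j<K g xs. (\<lambda>g ys. if code_drop (ys ! 0) (K g (drop 1 ys)) = 0 then 0 else 1) g (j # xs))"
    by (rule oracle_pr_sum) (intro oracle_pr_arith oracle_pr_code_drop oracle_pr_fst oracle_pr_drop1 assms)+
  then show ?thesis by (rule oracle_pr_cong) (simp add: code_length_def)
qed

lemma oracle_pr_code_cantor_num:
  assumes "oracle_pr n K"
  shows "oracle_pr n (\<lambda>g xs. code_cantor_num (K g xs))"
proof -
  have "oracle_pr n (\<lambda>g xs. 3 + (\<Sum>j<K g xs. (\<lambda>g ys. if code_drop (ys ! 0) (K g (drop 1 ys)) = 0 then 0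
     else (if code_drop (ys ! 0) (K g (drop 1 ys)) mod 2 = 0 then 4 else 2)
       * 3 ^ (code_length (K g (drop 1 ys)) - ys ! 0)) g (j # xs)))"
    by (intro oracle_pr_add oracle_pr_const, rule oracle_pr_sum)
      (intro oracle_pr_arith oracle_pr_code_drop oracle_pr_code_length oracle_pr_fst oracle_pr_drop1 assms)+
  then show ?thesis by (rule oracle_pr_cong) (simp add: code_cantor_num_def cong: if_cong)
qed

lemma oracle_pr_bump_num:
  assumes "oracle_pr n K" "oracle_pr n P" "oracle_pr n R"
  shows "oracle_pr n (\<lambda>g xs. bump_num g (K g xs) (P g xs) (R g xs))"
  unfolding bump_num_def lo_num_def hi_num_def
  by (intro oracle_pr_arith oracle_pr_code_cantor_num oracle_pr_code_length assms)

lemma oracle_pr_approx_num: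
  assumes "oracle_pr n N" "oracle_pr n P" "oracle_pr n R"
  shows "oracle_pr n (\<lambda>g xs. approx_num g (N g xs) (P g xs) (R g xs))"
proof -
  have "oracle_pr n (\<lambda>g xs. P g xs * 6 ^ (N g xs + 2) + outer_num (P g xs) (R g xs) * (3 * 6 ^ N g xs) +
     (\<Sum>j<N g xs. (\<lambda>g ys. bump_num g (ys ! 0) (P g (drop 1 ys)) (R g (drop 1 ys))
        * 3 ^ (N g (drop 1 ys) - code_length (ys ! 0)) * 2 ^ (N g (drop 1 ys) - ys ! 0)) g (j # xs)))"
    unfolding outer_num_def
    by (intro oracle_pr_arith assms, rule oracle_pr_sum)
      (intro oracle_pr_arith oracle_pr_bump_num oracle_pr_code_length oracle_pr_fst oracle_pr_drop1 assms)+
  then show ?thesis by (rule oracle_pr_cong) (simp add: approx_num_def)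
qed

lemma oracle_pr_tri_root:
  assumes "oracle_pr n F"
  shows "oracle_pr n (\<lambda>g xs. tri_root (F g xs))"
proof -
  have "oracle_pr n (\<lambda>g xs. \<Sum>t<Suc (F g xs).
      (\<lambda>g ys. if triangle (Suc (ys ! 0)) \<le> F g (drop 1 ys) then 1 else 0) g (t # xs))"
    by (rule oracle_pr_sum) (intro oracle_pr_arith oracle_pr_succ oracle_pr_fst oracle_pr_drop1 assms)+
  then show ?thesis by (rule oracle_pr_cong) (simp add: tri_root_def)
qed

lemma oracle_pr_approx_code: "oracle_pr 2 (\<lambda>g xs. approx_code g (xs ! 0) (xs ! 1))"
  unfolding approx_code_def prod_decode_tri_root approx_den_def split
  by (intro oracle_pr_arith oracle_pr_approx_num oracle_pr_tri_root oracle_pr_succ oracle_pr_proj) simp_all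

theorem lemma3p2:
  "\<exists>pA pD :: prog. \<forall>T. computable_tree T \<longrightarrow>
     (\<exists>(f :: real \<Rightarrow> real) A D.
        (\<forall>i n. ev (chi T) pA [i, n] (A i n)) \<and>
        (\<forall>m. ev (chi T) pD [m] (D m)) \<and>
        is_code f A D \<and>
        f ` {0..1} \<subseteq> {0..1} \<and>
        continuous_on {0..1} f \<and>
        mono_on {0..1} f \<and>
        (\<forall>x\<in>{0..1}. x \<le> f x) \<and>
        (\<forall>x\<in>{0..1}. f x = x \<longleftrightarrow>
            (x = 0 \<or> x = 1 \<or> (x \<in> cantor_set \<and> (\<exists>X. cantor X = x \<and> X \<in> paths T)))))"
proof -
  obtain pA where pA_prog: "\<forall>g xs. length xs = 2 \<longrightarrow> ev g pA xs (approx_code g (xs ! 0) (xs ! 1))"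
    using oracle_pr_approx_code unfolding oracle_pr_def by blast
  have pA: "ev g pA [i, n] (approx_code g i n)" for g i n
    using pA_prog[rule_format, of "[i, n]" g] by simp
  obtain pD where pD_prog: "\<forall>g xs. length xs = 1 \<longrightarrow> ev g pD xs (Suc (xs ! 0))"
    using oracle_pr_succ_proj unfolding oracle_pr_def by blast
  have pD: "ev g pD [m] (Suc m)" for g m
    using pD_prog[rule_format, of "[m]" g] by simp
  have maps_to: "tree_fun T ` {0..1} \<subseteq> {0..1}" for T
    using tree_fun_ge tree_fun_le_1 by (force intro: order.trans[OF _ tree_fun_ge])
  have continuous: "continuous_on {0..1} (tree_fun T)" for T
    by (rule lipschitz_on_continuous_on[OF lipschitz_onI[of _ _ 2]])
      (simp_all add: dist_real_def tree_fun_lipschitz)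
  show ?thesis
    apply (rule exI[of _ pA], rule exI[of _ pD], intro allI impI)
    subgoal for T
      using pA pD is_code_tree_fun[of T] maps_to[of T] continuous[of T] tree_fun_ge tree_fun_eq_self_iff
      by (intro exI[of _ "tree_fun T"] exI[of _ "approx_code (chi T)"] exI[of _ Suc])
        (auto intro: mono_onI tree_fun_mono)
    done
qed

end
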